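(* Let $\alpha(\ell)$ be the first-order formula in the language of rings $$\alpha(\ell):\ \ \neg\,\mathrm{C}(\ell)\ \wedge\ \forall f\,\exists q\,\big(\mathrm{C}(f-q\ell)\big),$$ where $\mathrm{C}(t)$ abbreviates the formula "$t=0\ \vee\ \exists u\,(tu=1)$". Then for every field $R$, the formula $\alpha$ defines in the ring $R[x]$ ($x$ a single indeterminate) exactly the set $L$ of polynomials of degree $1$. Moreover, for every field $R$ and every $\ell\in L\subseteq R[x]$ we have $\operatorname{POW}(\ell)=\operatorname{LPOW}(\ell)$. In particular, since $\operatorname{LPOW}(\ell)$ is defined by a fixed formula with parameter $\ell$, the sets $\operatorname{POW}(\ell)$, $\ell\in L$, are uniformly definable with parameter $\ell$ across all univariate polynomial rings over fields (of any characteristic).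
   Context: All rings are commutative and unital; $S^{*}$ denotes the units of $S$. For $\ell\in S$: $\operatorname{POW}(\ell)=\{\ell^n:n\ge1\}$; $\operatorname{LPOW}(\ell)$ is the set of $f\in S$ such that $\ell\mid f$, $(\ell-1)\mid(f-1)$, and every divisor of $f$ is a unit or a multiple of $\ell$. For a field $R$ and indeterminate $x$, $L\subseteq R[x]$ denotes the set of polynomials of degree exactly $1$. A family of sets is uniformly definable over a class of rings if a single first-order formula of the language of rings defines the corresponding set in every ring of the class. *)

theory Defs
  imports "HOL-Computational_Algebra.Polynomial"
begin

definition C_fml :: "'a::comm_ring_1 \<Rightarrow> bool" where
  "C_fml t \<longleftrightarrow> t = 0 \<or> (\<exists>u. t * u = 1)"

definition alpha_fml :: "'a::comm_ring_1 \<Rightarrow> bool" where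
  "alpha_fml l \<longleftrightarrow> \<not> C_fml l \<and> (\<forall>f. \<exists>q. C_fml (f - q * l))"

definition POW :: "'a::comm_ring_1 \<Rightarrow> 'a set" where
  "POW l = {l ^ n | n. n \<ge> 1}"

definition LPOW :: "'a::comm_ring_1 \<Rightarrow> 'a set" where
  "LPOW l = {f. l dvd f \<and> (l - 1) dvd (f - 1) \<and> (\<forall>d. d dvd f \<longrightarrow> d dvd 1 \<or> l dvd d)}"

definition Lset :: "'a::zero poly set" where
  "Lset = {p. degree p = 1}"

end

theory Submission
  imports Defs "HOL-Computational_Algebra.Polynomial_Factorial"
begin

text \<open>Over a field the units of \<open>R[x]\<close> together with \<open>0\<close> are exactly the constants, so
  \<open>\<alpha>(\<ell>)\<close> says that \<open>\<ell>\<close> is non-constant and every polynomial is congruent to a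
  constant modulo \<open>\<ell>\<close>; by division with remainder this happens iff \<open>deg \<ell> = 1\<close>.
  A linear \<open>\<ell>\<close> is prime, so the divisors of \<open>\<ell>\<^sup>n\<close> are units or multiples of \<open>\<ell>\<close>;
  conversely a nonzero \<open>f\<close> all of whose non-unit divisors are multiples of \<open>\<ell>\<close> is
  \<open>c \<ell>\<^sup>n\<close> for a constant \<open>c\<close>, and then \<open>\<ell> - 1 | f - 1\<close> forces \<open>\<ell> - 1 | c - 1\<close>,
  i.e. \<open>c = 1\<close>, since \<open>\<ell> - 1\<close> is again linear.\<close>

lemma C_fml_poly_iff: "C_fml (t :: 'a::field poly) \<longleftrightarrow> degree t = 0"
  unfolding C_fml_def by (metis degree_0 dvdE dvdI is_unit_iff_degree)

lemma nonconst_poly_dvd_const_iff: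
  fixes p :: "'a::field poly"
  assumes "degree p > 0"
  shows "p dvd [:c:] \<longleftrightarrow> c = 0"
  using assms dvd_imp_degree_le[of p "[:c:]"] by (cases "c = 0") auto

lemma alpha_fml_poly_iff: "alpha_fml (l :: 'a::field poly) \<longleftrightarrow> degree l = 1"
proof
  assume alpha: "alpha_fml l"
  then have "degree l \<noteq> 0"
    by (simp add: alpha_fml_def C_fml_poly_iff)
  from alpha obtain q where q: "degree ([:0, 1:] - q * l) = 0"
    by (auto simp: alpha_fml_def C_fml_poly_iff)
  have "\<not> degree l \<ge> 2"
  proof
    assume "degree l \<ge> 2"
    moreover have "q \<noteq> 0"
      using q by auto
    moreover have "l \<noteq> 0"
      using \<open>degree l \<ge> 2\<close> by auto
    ultimately have x_lt: "degree ([:0, 1:] :: 'a poly) < degree (q * l)"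
      by (auto simp: degree_mult_eq)
    then have "degree ([:0, 1:] - q * l) = degree (q * l)"
      by (metis degree_add_eq_right degree_minus diff_conv_add_uminus)
    with q x_lt show False
      by simp
  qed
  with \<open>degree l \<noteq> 0\<close> show "degree l = 1"
    by linarith
next
  assume deg: "degree l = 1"
  have "C_fml (f - (f div l) * l)" for f
  proof -
    have "f - (f div l) * l = f mod l"
      by (metis add_diff_cancel_left' div_mult_mod_eq)
    moreover have "degree (f mod l) = 0"
      using degree_mod_less[of l f] deg by (cases "l = 0") auto
    ultimately show ?thesis
      by (simp add: C_fml_poly_iff)
  qed
  with deg show "alpha_fml l"
    by (auto simp: alpha_fml_def C_fml_poly_iff)
qed

lemma prime_elem_degree_1_poly:
  assumes "degree (l :: 'a::field poly) = 1"
  shows "prime_elem l"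
proof -
  have "l = [:coeff l 0, coeff l 1:]"
    using assms by (auto simp: poly_eq_iff coeff_pCons split: nat.split intro!: coeff_eq_0)
  moreover have "coeff l 1 \<noteq> 0"
    using assms leading_coeff_neq_0[of l] by fastforce
  ultimately show ?thesis
    by (metis prime_elem_linear_field_poly)
qed

lemma prime_elem_dvd_power_imp_unit_or_dvd:
  fixes p :: "'a::idom"
  assumes "prime_elem p" and "d dvd p ^ n"
  shows "d dvd 1 \<or> p dvd d"
  using assms(2)
proof (induction n arbitrary: d)
  case (Suc n)
  from Suc.prems obtain e where e: "p * p ^ n = d * e"
    by (auto elim: dvdE)
  then have "p dvd d \<or> p dvd e"
    using assms(1) by (metis dvd_triv_left prime_elem_dvd_multD)
  then show ?case
  proof
    assume "p dvd e"
    then obtain e' where "e = p * e'"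
      by (rule dvdE)
    with e have "p ^ n = d * e'"
      using assms(1) by (simp add: mult.left_commute)
    then show ?case
      by (intro Suc.IH dvdI)
  qed simp
qed simp

lemma poly_eq_smult_power_if_divisors:
  fixes l f :: "'a::field poly"
  assumes "degree l > 0" and "f \<noteq> 0"
    and "\<forall>d. d dvd f \<longrightarrow> is_unit d \<or> l dvd d"
  shows "\<exists>c n. f = smult c (l ^ n)"
  using assms(2,3)
proof (induction "degree f" arbitrary: f rule: less_induct)
  case less
  show ?case
  proof (cases "is_unit f")
    case True
    then obtain c where "f = [:c:]"
      by (auto simp: is_unit_poly_iff)
    then have "f = smult c (l ^ 0)"
      by simp
    then show ?thesis
      by blast
  next
    case False
    with less.prems(2) have "l dvd f"
      by (meson dvd_refl)
    then obtain g where g: "f = l * g"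
      by (rule dvdE)
    with less.prems(1) have "g \<noteq> 0" and "l \<noteq> 0"
      by auto
    with g assms(1) have "degree g < degree f"
      by (simp add: degree_mult_eq)
    moreover have "\<forall>d. d dvd g \<longrightarrow> is_unit d \<or> l dvd d"
      using less.prems(2) g by (metis dvd_mult)
    ultimately obtain c n where "g = smult c (l ^ n)"
      using less.hyps[of g] \<open>g \<noteq> 0\<close> by auto
    with g have "f = smult c (l ^ Suc n)"
      by (simp add: mult_smult_right)
    then show ?thesis
      by blast
  qed
qed

lemma diff_one_dvd_power_diff_one: "(x - 1 :: 'a::comm_ring_1) dvd x ^ n - 1"
  by (simp add: power_diff_1_eq)

lemma POW_eq_LPOW_degree_1:
  assumes deg: "degree (l :: 'a::field poly) = 1"
  shows "POW l = LPOW l"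
proof
  show "POW l \<subseteq> LPOW l"
  proof
    fix f assume "f \<in> POW l"
    then obtain n where "n \<ge> 1" "f = l ^ n"
      unfolding POW_def by blast
    then show "f \<in> LPOW l"
      using prime_elem_dvd_power_imp_unit_or_dvd[OF prime_elem_degree_1_poly[OF deg]]
      by (auto simp: LPOW_def dvd_power diff_one_dvd_power_diff_one)
  qed
next
  have deg_l1: "degree (l - 1) = 1"
    using deg by (metis degree_add_eq_left degree_1 diff_conv_add_uminus degree_minus zero_less_one)
  show "LPOW l \<subseteq> POW l"
  proof
    fix f assume "f \<in> LPOW l"
    then have l_dvd: "l dvd f" and l1_dvd: "(l - 1) dvd (f - 1)"
      and divisors: "\<forall>d. d dvd f \<longrightarrow> is_unit d \<or> l dvd d"
      unfolding LPOW_def by blast+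
    have "f \<noteq> 0"
    proof
      assume "f = 0"
      with l1_dvd have "(l - 1) dvd - 1"
        by simp
      then have "(l - 1) dvd [:1:]"
        by (simp only: dvd_minus_iff one_pCons)
      with deg_l1 show False
        by (simp add: nonconst_poly_dvd_const_iff)
    qed
    then obtain c n where f: "f = smult c (l ^ n)"
      using poly_eq_smult_power_if_divisors[of l f] deg divisors by auto
    have "(l - 1) dvd (f - 1) - smult c (l ^ n - 1)"
      using l1_dvd by (rule dvd_diff[OF _ dvd_smult[OF diff_one_dvd_power_diff_one]])
    also have "(f - 1) - smult c (l ^ n - 1) = [:c - 1:]"
      using f by (simp add: smult_diff_right one_pCons)
    finally have "c = 1"
      using nonconst_poly_dvd_const_iff[of "l - 1" "c - 1"] deg_l1 by simp
    moreover have "n \<noteq> 0"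
    proof
      assume "n = 0"
      with l_dvd f \<open>f \<noteq> 0\<close> have "l dvd [:c:]" and "c \<noteq> 0"
        by auto
      with deg show False
        using nonconst_poly_dvd_const_iff[of l c] by simp
    qed
    ultimately show "f \<in> POW l"
      using f unfolding POW_def by auto
  qed
qed

theorem proposition1p7:
  shows "(\<forall>l :: 'a::field poly. alpha_fml l \<longleftrightarrow> l \<in> Lset) \<and>
         (\<forall>l :: 'a::field poly. l \<in> Lset \<longrightarrow> POW l = LPOW l)"
  by (simp add: Lset_def alpha_fml_poly_iff POW_eq_LPOW_degree_1)

end
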